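(* Let $$A=\begin{bmatrix}1&1&1&1\\1&1&1&1\\1&0&0&0\end{bmatrix}.$$ For every integer $k\geq 1$ there exists an integer $m\leq 64k+1$ such that $$\mathrm{forb}(m,A)\geq \frac53\binom{m}{2}+\binom{m}{1}+\binom{m}{0}+k.$$
   Context: A simple $0$-$1$ matrix is one with no repeated columns; an $m\times n$ simple $0$-$1$ matrix is identified with a family of $n$ distinct subsets of $[m]$ (rows index elements, columns index sets). A matrix $M$ has configuration $F$ if some submatrix of $M$ is a row and column permutation of $F$. $\mathrm{forb}(m,F)$ denotes the maximum number of columns of an $m$-rowed simple $0$-$1$ matrix that does not have configuration $F$. A triple system of order $m$ and multiplicity $\lambda$ is a family of $3$-element subsets (blocks) of an $m$-element set in which every pair of distinct elements lies in exactly $\lambda$ blocks. *)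

theory Defs
  imports Complex_Main
begin

text \<open>A simple m-rowed 0-1 matrix is a family Fam of distinct subsets of [m] = {0..<m}
  (column = set of rows where the entry is 1). A configuration F is a p x q 0-1 matrix,
  given as a predicate F i j (i<p row, j<q column; True = entry 1).\<close>

definition simple_matrix :: "nat \<Rightarrow> nat set set \<Rightarrow> bool" where
  "simple_matrix m Fam \<longleftrightarrow> Fam \<subseteq> Pow {..<m}"

definition has_config :: "nat \<Rightarrow> nat set set \<Rightarrow> nat \<Rightarrow> nat \<Rightarrow> (nat \<Rightarrow> nat \<Rightarrow> bool) \<Rightarrow> bool" where
  "has_config m Fam p q F \<longleftrightarrow>
     (\<exists>r c. inj_on r {..<p} \<and> r ` {..<p} \<subseteq> {..<m} \<and>
            inj_on c {..<q} \<and> c ` {..<q} \<subseteq> Fam \<and>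
            (\<forall>i<p. \<forall>j<q. (r i \<in> c j) = F i j))"

definition forb :: "nat \<Rightarrow> nat \<Rightarrow> nat \<Rightarrow> (nat \<Rightarrow> nat \<Rightarrow> bool) \<Rightarrow> nat" where
  "forb m p q F = Max {card Fam | Fam. simple_matrix m Fam \<and> \<not> has_config m Fam p q F}"

definition matA :: "nat \<Rightarrow> nat \<Rightarrow> bool" where
  "matA i j \<longleftrightarrow> (i \<le> 1 \<or> j = 0)"

end

theory Submission
  imports Defs
begin

text \<open>Take \<open>m = 4^n\<close> with \<open>16k < m \<le> 64k\<close>. The lines of the affine space \<open>AG(n, 4)\<close> form a
  Steiner system \<open>S(2, 4, m)\<close>, and the family of all subsets of lines avoids \<open>A\<close>: the four
  columns all contain the two rows of ones, so they lie in a common line, which also contains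
  the third row; the three columns missing the third row then differ only inside the single
  remaining point of that line, which leaves room for two of them at most. The family contains
  every set of size at most 2 and, for each of the at least \<open>m(m-1)/12\<close> lines, the five subsets
  of size at least 3 owned by that line alone. This gives \<open>11/6 (m choose 2) + m + 1\<close> columns,
  and the surplus \<open>(m choose 2)/6\<close> over the bound in question exceeds \<open>k\<close> because \<open>m > 16k\<close>.\<close>

text \<open>The field with four elements, \<open>GF(2)[\<alpha>]/(\<alpha>\<^sup>2 + \<alpha> + 1)\<close>, with \<open>Alpha = \<alpha>\<close> and
  \<open>Beta = \<alpha>\<^sup>2 = \<alpha> + 1\<close>.\<close>

datatype gf4 = Zero | One | Alpha | Beta

instantiation gf4 :: field
begin

definition zero_gf4 where "0 = Zero"
definition one_gf4 where "1 = One"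

fun plus_gf4 :: "gf4 \<Rightarrow> gf4 \<Rightarrow> gf4" where
  "plus_gf4 Zero x = x" | "plus_gf4 x Zero = x"
| "plus_gf4 One One = Zero" | "plus_gf4 One Alpha = Beta" | "plus_gf4 One Beta = Alpha"
| "plus_gf4 Alpha One = Beta" | "plus_gf4 Alpha Alpha = Zero" | "plus_gf4 Alpha Beta = One"
| "plus_gf4 Beta One = Alpha" | "plus_gf4 Beta Alpha = One" | "plus_gf4 Beta Beta = Zero"

fun times_gf4 :: "gf4 \<Rightarrow> gf4 \<Rightarrow> gf4" where
  "times_gf4 Zero x = Zero" | "times_gf4 x Zero = Zero"
| "times_gf4 One x = x" | "times_gf4 x One = x"
| "times_gf4 Alpha Alpha = Beta" | "times_gf4 Alpha Beta = One"
| "times_gf4 Beta Alpha = One" | "times_gf4 Beta Beta = Alpha"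

fun inverse_gf4 :: "gf4 \<Rightarrow> gf4" where
  "inverse_gf4 Alpha = Beta" | "inverse_gf4 Beta = Alpha" | "inverse_gf4 x = x"

definition uminus_gf4 :: "gf4 \<Rightarrow> gf4" where "uminus_gf4 x = x"
definition minus_gf4 :: "gf4 \<Rightarrow> gf4 \<Rightarrow> gf4" where "minus_gf4 x y = x + y"
definition divide_gf4 :: "gf4 \<Rightarrow> gf4 \<Rightarrow> gf4" where "divide_gf4 x y = x * inverse y"

instance proof
  fix a b c :: gf4
  show "a * b * c = a * (b * c)" by (cases a; cases b; cases c) simp_all
  show "a * b = b * a" by (cases a; cases b) simp_all
  show "1 * a = a" by (cases a) (simp_all add: one_gf4_def)
  show "a + b + c = a + (b + c)" by (cases a; cases b; cases c) simp_all
  show "a + b = b + a" by (cases a; cases b) simp_all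
  show "0 + a = a" by (simp add: zero_gf4_def)
  show "- a + a = 0" by (cases a) (simp_all add: uminus_gf4_def zero_gf4_def)
  show "a - b = a + - b" by (simp add: minus_gf4_def uminus_gf4_def)
  show "(a + b) * c = a * c + b * c" by (cases a; cases b; cases c) simp_all
  show "(0::gf4) \<noteq> 1" by (simp add: zero_gf4_def one_gf4_def)
  show "a \<noteq> 0 \<Longrightarrow> inverse a * a = 1" by (cases a) (simp_all add: zero_gf4_def one_gf4_def)
  show "divide a b = a * inverse b" by (simp add: divide_gf4_def)
  show "inverse (0::gf4) = 0" by (simp add: zero_gf4_def)
qed

end

lemma UNIV_gf4: "(UNIV :: gf4 set) = {Zero, One, Alpha, Beta}"
  using gf4.exhaust by blast

instance gf4 :: finite
  by standard (simp add: UNIV_gf4)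

lemma card_UNIV_gf4: "card (UNIV :: gf4 set) = 4"
  by (simp add: UNIV_gf4)

definition affine_line :: "'a::field list \<Rightarrow> 'a list \<Rightarrow> 'a list set" where
  "affine_line p q = range (\<lambda>t. map2 (\<lambda>a b. a + t * (b - a)) p q)"

lemma length_affine_line:
  "x \<in> affine_line p q \<Longrightarrow> length p = length q \<Longrightarrow> length x = length q"
  by (auto simp: affine_line_def)

lemma endpoints_in_affine_line:
  assumes "length p = length q"
  shows "p \<in> affine_line p q" "q \<in> affine_line p q"
proof -
  have "p = map2 (\<lambda>a b. a + 0 * (b - a)) p q" "q = map2 (\<lambda>a b. a + 1 * (b - a)) p q"
    using assms by (auto intro: nth_equalityI)
  then show "p \<in> affine_line p q" "q \<in> affine_line p q"
    unfolding affine_line_def by blast+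
qed

lemma card_affine_line:
  fixes p q :: "'a::{field,finite} list"
  assumes "length p = length q" "p \<noteq> q"
  shows "card (affine_line p q) = card (UNIV :: 'a set)"
proof -
  obtain i where i: "i < length p" "p ! i \<noteq> q ! i"
    using assms nth_equalityI by blast
  have "inj (\<lambda>t. map2 (\<lambda>a b. a + t * (b - a)) p q)"
  proof (rule injI)
    fix s t :: 'a
    assume "map2 (\<lambda>a b. a + s * (b - a)) p q = map2 (\<lambda>a b. a + t * (b - a)) p q"
    then have "map2 (\<lambda>a b. a + s * (b - a)) p q ! i = map2 (\<lambda>a b. a + t * (b - a)) p q ! i"
      by (simp only:)
    then show "s = t" using assms(1) i by simp
  qed
  then show ?thesis unfolding affine_line_def by (simp add: card_image)
qed

lemma affine_line_subset:
  assumes "length p = length q" "x \<in> affine_line p q" "y \<in> affine_line p q"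
  shows "affine_line x y \<subseteq> affine_line p q"
proof
  fix z assume "z \<in> affine_line x y"
  then obtain u where z: "z = map2 (\<lambda>a b. a + u * (b - a)) x y" by (auto simp: affine_line_def)
  obtain s where x: "x = map2 (\<lambda>a b. a + s * (b - a)) p q" using assms(2) by (auto simp: affine_line_def)
  obtain t where y: "y = map2 (\<lambda>a b. a + t * (b - a)) p q" using assms(3) by (auto simp: affine_line_def)
  have "z = map2 (\<lambda>a b. a + (s + u * (t - s)) * (b - a)) p q"
    unfolding z x y using assms(1) by (auto intro!: nth_equalityI simp: algebra_simps)
  then show "z \<in> affine_line p q" unfolding affine_line_def by blast
qed

lemma affine_line_eq:
  fixes p q :: "'a::{field,finite} list"
  assumes "length p = length q" "p \<noteq> q" "x \<in> affine_line p q" "y \<in> affine_line p q" "x \<noteq> y"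
  shows "affine_line x y = affine_line p q"
proof (rule card_subset_eq)
  show "finite (affine_line p q)" unfolding affine_line_def by simp
  show "affine_line x y \<subseteq> affine_line p q" using affine_line_subset assms(1,3,4) .
  have "length x = length y" using assms(1,3,4) length_affine_line by metis
  then show "card (affine_line x y) = card (affine_line p q)"
    using card_affine_line assms(1,2,5) by metis
qed

definition linear_blocks :: "'a set set \<Rightarrow> bool" where
  "linear_blocks B \<longleftrightarrow> (\<forall>L\<in>B. \<forall>L'\<in>B. \<forall>x y. x \<noteq> y \<longrightarrow> x \<in> L \<inter> L' \<longrightarrow> y \<in> L \<inter> L' \<longrightarrow> L = L')"

definition steiner_system :: "'a set \<Rightarrow> nat \<Rightarrow> 'a set set \<Rightarrow> bool" where
  "steiner_system P k B \<longleftrightarrow> (\<forall>L\<in>B. L \<subseteq> P \<and> card L = k) \<and>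
     (\<forall>x\<in>P. \<forall>y\<in>P. x \<noteq> y \<longrightarrow> (\<exists>L\<in>B. x \<in> L \<and> y \<in> L)) \<and> linear_blocks B"

lemma linear_blocksD:
  "linear_blocks B \<Longrightarrow> L \<in> B \<Longrightarrow> L' \<in> B \<Longrightarrow> x \<noteq> y \<Longrightarrow> x \<in> L \<Longrightarrow> y \<in> L \<Longrightarrow> x \<in> L' \<Longrightarrow> y \<in> L' \<Longrightarrow> L = L'"
  unfolding linear_blocks_def by blast

lemma steiner_systemD:
  assumes "steiner_system P k B"
  shows "L \<in> B \<Longrightarrow> L \<subseteq> P" "L \<in> B \<Longrightarrow> card L = k"
    and "x \<in> P \<Longrightarrow> y \<in> P \<Longrightarrow> x \<noteq> y \<Longrightarrow> \<exists>L\<in>B. x \<in> L \<and> y \<in> L"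
    and "linear_blocks B"
  using assms unfolding steiner_system_def by blast+

lemma linear_blocks_image:
  assumes "inj_on h P" "\<forall>L\<in>B. L \<subseteq> P" "linear_blocks B"
  shows "linear_blocks ((`) h ` B)"
  unfolding linear_blocks_def
proof (intro ballI allI impI)
  fix L1 L2 x y
  assume "L1 \<in> (`) h ` B" "L2 \<in> (`) h ` B" and xy: "x \<noteq> y" "x \<in> L1 \<inter> L2" "y \<in> L1 \<inter> L2"
  then obtain M1 M2 where M: "M1 \<in> B" "M2 \<in> B" "L1 = h ` M1" "L2 = h ` M2" by blast
  have common: "\<exists>a. a \<in> M1 \<inter> M2 \<and> h a = z" if z: "z \<in> L1 \<inter> L2" for z
  proof -
    obtain a1 a2 where a: "a1 \<in> M1" "a2 \<in> M2" "h a1 = z" "h a2 = z" using z unfolding M(3,4) by auto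
    then have "a1 = a2" using M assms(1,2) by (metis inj_onD subsetD)
    then show ?thesis using a by blast
  qed
  obtain a b where "a \<in> M1 \<inter> M2" "b \<in> M1 \<inter> M2" "a \<noteq> b"
    using common[OF xy(2)] common[OF xy(3)] xy(1) by blast
  then have "M1 = M2" using linear_blocksD[OF assms(3) M(1,2)] by blast
  then show "L1 = L2" using M by simp
qed

lemma steiner_system_image:
  assumes "inj_on h P" "steiner_system P k B"
  shows "steiner_system (h ` P) k ((`) h ` B)"
proof -
  note blocks = steiner_systemD[OF assms(2)]
  have "\<forall>L'\<in>(`) h ` B. L' \<subseteq> h ` P \<and> card L' = k"
  proof
    fix L' assume "L' \<in> (`) h ` B"
    then obtain L where L: "L \<in> B" "L' = h ` L" by blast
    have "card (h ` L) = k"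
      using card_image[OF inj_on_subset[OF assms(1) blocks(1)[OF L(1)]]] blocks(2)[OF L(1)] by simp
    then show "L' \<subseteq> h ` P \<and> card L' = k" using blocks(1)[OF L(1)] L(2) by blast
  qed
  moreover have "\<forall>x'\<in>h ` P. \<forall>y'\<in>h ` P. x' \<noteq> y' \<longrightarrow> (\<exists>L'\<in>(`) h ` B. x' \<in> L' \<and> y' \<in> L')"
  proof (intro ballI impI)
    fix x' y' assume "x' \<in> h ` P" "y' \<in> h ` P" "x' \<noteq> y'"
    then obtain x y where "x \<in> P" "y \<in> P" "x \<noteq> y" "x' = h x" "y' = h y" by blast
    moreover obtain L where "L \<in> B" "x \<in> L" "y \<in> L" using blocks(3) calculation(1-3) by blast
    ultimately show "\<exists>L'\<in>(`) h ` B. x' \<in> L' \<and> y' \<in> L'" by blast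
  qed
  moreover have "linear_blocks ((`) h ` B)"
    using linear_blocks_image[OF assms(1)] blocks(1,4) by blast
  ultimately show ?thesis unfolding steiner_system_def by blast
qed

lemma affine_steiner_system:
  "steiner_system {xs :: 'a::{field,finite} list. length xs = n} (card (UNIV :: 'a set))
     {affine_line p q | p q. length p = n \<and> length q = n \<and> p \<noteq> q}"
  (is "steiner_system ?P _ ?B")
proof -
  have "\<forall>L\<in>?B. L \<subseteq> ?P \<and> card L = card (UNIV :: 'a set)"
    using length_affine_line card_affine_line by fastforce
  moreover have "\<forall>x\<in>?P. \<forall>y\<in>?P. x \<noteq> y \<longrightarrow> (\<exists>L\<in>?B. x \<in> L \<and> y \<in> L)"
    using endpoints_in_affine_line by fastforce
  moreover have "linear_blocks ?B"
    unfolding linear_blocks_def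
  proof (intro ballI allI impI)
    fix L L' x y
    assume "L \<in> ?B" "L' \<in> ?B" and xy: "x \<noteq> y" "x \<in> L \<inter> L'" "y \<in> L \<inter> L'"
    then obtain p q p' q' where
      "L = affine_line p q" "length p = n" "length q = n" "p \<noteq> q" and
      "L' = affine_line p' q'" "length p' = n" "length q' = n" "p' \<noteq> q'"
      by blast
    then have "affine_line x y = L" "affine_line x y = L'"
      using affine_line_eq[of p q x y] affine_line_eq[of p' q' x y] xy by auto
    then show "L = L'" by simp
  qed
  ultimately show ?thesis unfolding steiner_system_def by blast
qed

lemma card_lists_UNIV: "card {xs :: 'a::finite list. length xs = n} = card (UNIV :: 'a set) ^ n"
  using card_lists_length_eq[of "UNIV :: 'a set" n] by simp

lemma finite_lists_UNIV: "finite {xs :: 'a::finite list. length xs = n}"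
  using finite_lists_length_eq[of "UNIV :: 'a set" n] by simp

lemma ex_steiner_system_power_of_4: "\<exists>B. steiner_system {..<4 ^ n} 4 (B :: nat set set)"
proof -
  let ?P = "{xs :: gf4 list. length xs = n}"
  obtain h where "bij_betw h ?P {..<(4::nat) ^ n}"
    using finite_same_card_bij[OF finite_lists_UNIV[where 'a = gf4, of n], of "{..<(4::nat) ^ n}"]
    by (auto simp: card_lists_UNIV card_UNIV_gf4)
  then have inj: "inj_on h ?P" and range: "h ` ?P = {..<4 ^ n}" by (auto simp: bij_betw_def)
  show ?thesis
    using steiner_system_image[OF inj affine_steiner_system] unfolding range card_UNIV_gf4 by blast
qed

lemma subsets_in_common_block:
  assumes "linear_blocks B" "\<forall>C\<in>Cs. \<exists>L\<in>B. C \<subseteq> L" "\<forall>C\<in>Cs. x \<in> C \<and> y \<in> C" "x \<noteq> y" "C0 \<in> Cs"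
  obtains L where "L \<in> B" "\<forall>C\<in>Cs. C \<subseteq> L"
proof -
  obtain L where L: "L \<in> B" "C0 \<subseteq> L" using assms(2,5) by blast
  have "C \<subseteq> L" if C: "C \<in> Cs" for C
  proof -
    obtain L' where L': "L' \<in> B" "C \<subseteq> L'" using assms(2) C by blast
    have "L' = L"
      using linear_blocksD[OF assms(1) L'(1) L(1) assms(4)] assms(3,5) C L L' by blast
    then show ?thesis using L' by simp
  qed
  then show thesis using that L(1) by blast
qed

lemma not_has_config_matA_Pow_blocks:
  assumes small: "\<forall>L\<in>B. finite L \<and> card L \<le> 4" and lin: "linear_blocks B"
  shows "\<not> has_config m (\<Union>L\<in>B. Pow L) 3 4 matA"
proof
  assume "has_config m (\<Union>L\<in>B. Pow L) 3 4 matA"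
  then obtain r c where r: "inj_on r {..<3}" and c: "inj_on c {..<4}" "c ` {..<4} \<subseteq> (\<Union>L\<in>B. Pow L)"
    and entries: "\<forall>i<3. \<forall>j<4. (r i \<in> c j) = matA i j"
    unfolding has_config_def by (elim exE conjE) (rule that)
  have rows: "r 0 \<noteq> r 1" "r 0 \<noteq> r 2" "r 1 \<noteq> r 2"
    using inj_onD[OF r] by fastforce+
  have top: "r 0 \<in> c j \<and> r 1 \<in> c j" if "j < 4" for j using entries that by (simp add: matA_def)
  have bottom: "r 2 \<in> c j \<longleftrightarrow> j = 0" if "j < 4" for j using entries that by (simp add: matA_def)
  have "\<forall>C\<in>c ` {..<4}. \<exists>L\<in>B. C \<subseteq> L" using c(2) by blast
  moreover have "\<forall>C\<in>c ` {..<4}. r 0 \<in> C \<and> r 1 \<in> C" using top by blast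
  moreover have "c 0 \<in> c ` {..<4}" by simp
  ultimately obtain L where L: "L \<in> B" "\<forall>C\<in>c ` {..<4}. C \<subseteq> L"
    by (rule subsets_in_common_block[OF lin _ _ rows(1)])
  define R where "R = L - {r 0, r 1, r 2}"
  have "{r 0, r 1, r 2} \<subseteq> L" using L(2) top[of 0] bottom[of 0] by auto
  moreover have "finite L" "card L \<le> 4" using small L(1) by auto
  ultimately have "finite R" "card R \<le> 1"
    using rows unfolding R_def by (simp_all add: card_Diff_subset)
  then have "card (Pow R) \<le> 2"
    using power_increasing[of "card R" 1 "2::nat"] by (simp add: card_Pow)
  moreover have "inj_on (\<lambda>j. c j - {r 0, r 1}) {1, 2, 3}"
  proof (rule inj_onI)
    fix i j :: nat
    assume ij: "i \<in> {1, 2, 3}" "j \<in> {1, 2, 3}" and eq: "c i - {r 0, r 1} = c j - {r 0, r 1}"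
    have "c i = (c i - {r 0, r 1}) \<union> {r 0, r 1}" "c j = (c j - {r 0, r 1}) \<union> {r 0, r 1}"
      using top ij by auto
    then have "c i = c j" using eq by simp
    moreover have "i \<in> {..<4}" "j \<in> {..<4}" using ij by auto
    ultimately show "i = j" by (rule inj_onD[OF c(1)])
  qed
  moreover have "(\<lambda>j. c j - {r 0, r 1}) ` {1, 2, 3} \<subseteq> Pow R"
    using L(2) bottom unfolding R_def by auto
  ultimately have "card {1, 2, 3 :: nat} \<le> card (Pow R)"
    using \<open>finite R\<close> by (intro card_inj_on_le) auto
  with \<open>card (Pow R) \<le> 2\<close> show False by simp
qed

lemma card_subsets_card_le:
  assumes "finite A"
  shows "card {S. S \<subseteq> A \<and> card S \<le> k} = (\<Sum>i\<le>k. card A choose i)"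
proof (induction k)
  case 0
  have "{S. S \<subseteq> A \<and> card S \<le> 0} = {{}}"
    using assms by (auto dest: finite_subset)
  then show ?case by simp
next
  case (Suc k)
  have "{S. S \<subseteq> A \<and> card S \<le> Suc k} = {S. S \<subseteq> A \<and> card S \<le> k} \<union> {S. S \<subseteq> A \<and> card S = Suc k}"
    by auto
  moreover have "finite {S. S \<subseteq> A \<and> card S \<le> k}" "finite {S. S \<subseteq> A \<and> card S = Suc k}"
    using assms by auto
  ultimately show ?case
    using Suc.IH n_subsets[OF assms, of "Suc k"] by (simp add: card_Un_disjoint disjoint_iff)
qed

lemma card_subsets_card_ge_3:
  assumes "card L = 4"
  shows "card {S. S \<subseteq> L \<and> 3 \<le> card S} = 5"
proof -
  have fin: "finite L" using assms by (simp add: card_ge_0_finite)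
  have "{S. S \<subseteq> L \<and> 3 \<le> card S} = Pow L - {S. S \<subseteq> L \<and> card S \<le> 2}" by auto
  moreover have "card {S. S \<subseteq> L \<and> card S \<le> 2} = 11"
    using card_subsets_card_le[OF fin, of 2] assms by (simp add: numeral_eq_Suc)
  moreover have "card (Pow L - {S. S \<subseteq> L \<and> card S \<le> 2}) = card (Pow L) - card {S. S \<subseteq> L \<and> card S \<le> 2}"
    using fin by (intro card_Diff_subset) (auto intro: finite_subset[of _ "Pow L"])
  ultimately show ?thesis
    using fin assms by (simp add: card_Pow)
qed

lemma steiner_system_finite:
  assumes "steiner_system P k B" "finite P"
  shows "finite B" "L \<in> B \<Longrightarrow> finite L"
proof -
  have "B \<subseteq> Pow P" using steiner_systemD(1)[OF assms(1)] by auto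
  then show "finite B" using assms(2) by (simp add: finite_subset)
  show "L \<in> B \<Longrightarrow> finite L" using steiner_systemD(1)[OF assms(1)] assms(2) by (rule finite_subset)
qed

lemma small_subsets_subset_Pow_blocks:
  assumes "steiner_system P k B" "2 \<le> card P"
  shows "{S. S \<subseteq> P \<and> card S \<le> 2} \<subseteq> (\<Union>L\<in>B. Pow L)"
proof
  fix S assume "S \<in> {S. S \<subseteq> P \<and> card S \<le> 2}"
  moreover have "finite P" using assms(2) by (simp add: card_ge_0_finite)
  ultimately obtain T where "S \<subseteq> T" "T \<subseteq> P" "card T = 2"
    using exists_subset_between[of S 2 P] assms(2) by auto
  then obtain x y where xy: "S \<subseteq> {x, y}" "x \<in> P" "y \<in> P" "x \<noteq> y"
    by (auto simp: card_2_iff)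
  then obtain L where "L \<in> B" "x \<in> L" "y \<in> L" using steiner_systemD(3)[OF assms(1)] by blast
  then show "S \<in> (\<Union>L\<in>B. Pow L)" using xy by blast
qed

lemma card_UN_large_subsets_blocks:
  assumes "linear_blocks B" "finite B" "\<And>L. L \<in> B \<Longrightarrow> finite L"
  shows "card (\<Union>L\<in>B. {S. S \<subseteq> L \<and> 3 \<le> card S}) = (\<Sum>L\<in>B. card {S. S \<subseteq> L \<and> 3 \<le> card S})"
proof (rule card_UN_disjoint)
  show "\<forall>L\<in>B. finite {S. S \<subseteq> L \<and> 3 \<le> card S}" using assms(3) by simp
  show "\<forall>L\<in>B. \<forall>L'\<in>B. L \<noteq> L' \<longrightarrow> {S. S \<subseteq> L \<and> 3 \<le> card S} \<inter> {S. S \<subseteq> L' \<and> 3 \<le> card S} = {}"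
  proof (intro ballI impI)
    fix L L' assume "L \<in> B" "L' \<in> B" "L \<noteq> L'"
    show "{S. S \<subseteq> L \<and> 3 \<le> card S} \<inter> {S. S \<subseteq> L' \<and> 3 \<le> card S} = {}"
    proof (rule ccontr)
      assume "{S. S \<subseteq> L \<and> 3 \<le> card S} \<inter> {S. S \<subseteq> L' \<and> 3 \<le> card S} \<noteq> {}"
      then obtain S where "S \<subseteq> L \<inter> L'" "3 \<le> card S" by auto
      then obtain x y where "x \<in> L \<inter> L'" "y \<in> L \<inter> L'" "x \<noteq> y"
        using card_le_Suc0_iff_eq[of S] card_ge_0_finite[of S] by force
      then show False using linear_blocksD[OF assms(1) \<open>L \<in> B\<close> \<open>L' \<in> B\<close>] \<open>L \<noteq> L'\<close> by blast
    qed
  qed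
qed (use assms(2) in simp)

lemma choose_two_le_card_blocks:
  assumes "steiner_system P k B" "finite P"
  shows "card P choose 2 \<le> (k choose 2) * card B"
proof -
  note finite = steiner_system_finite[OF assms]
  have "{S. S \<subseteq> P \<and> card S = 2} \<subseteq> (\<Union>L\<in>B. {S. S \<subseteq> L \<and> card S = 2})"
  proof
    fix S assume "S \<in> {S. S \<subseteq> P \<and> card S = 2}"
    then obtain x y where "S = {x, y}" "x \<noteq> y" "x \<in> P" "y \<in> P" by (auto simp: card_2_iff)
    then show "S \<in> (\<Union>L\<in>B. {S. S \<subseteq> L \<and> card S = 2})"
      using steiner_systemD(3)[OF assms(1)] by fastforce
  qed
  moreover have "finite (\<Union>L\<in>B. {S. S \<subseteq> L \<and> card S = 2})"
    using finite by simp
  ultimately have "card {S. S \<subseteq> P \<and> card S = 2} \<le> card (\<Union>L\<in>B. {S. S \<subseteq> L \<and> card S = 2})"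
    by (intro card_mono)
  then have "card P choose 2 \<le> card (\<Union>L\<in>B. {S. S \<subseteq> L \<and> card S = 2})"
    by (simp add: n_subsets[OF assms(2)])
  also have "\<dots> \<le> (\<Sum>L\<in>B. card {S. S \<subseteq> L \<and> card S = 2})"
    by (rule card_UN_le[OF finite(1)])
  also have "\<dots> = (k choose 2) * card B"
    using n_subsets[OF finite(2)] steiner_systemD(2)[OF assms(1)] by simp
  finally show ?thesis .
qed

lemma card_Pow_blocks_ge:
  assumes "steiner_system P 4 B" "finite P" "2 \<le> card P"
  shows "11/6 * real (card P choose 2) + card P + 1 \<le> card (\<Union>L\<in>B. Pow L)"
proof -
  note finite = steiner_system_finite[OF assms(1,2)]
  let ?small = "{S. S \<subseteq> P \<and> card S \<le> 2}"
  let ?large = "\<Union>L\<in>B. {S. S \<subseteq> L \<and> 3 \<le> card S}"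
  have "card ?small = 1 + card P + (card P choose 2)"
    using card_subsets_card_le[OF assms(2), of 2] by (simp add: numeral_eq_Suc)
  moreover have "card ?large = 5 * card B"
  proof -
    have "card ?large = (\<Sum>L\<in>B. card {S. S \<subseteq> L \<and> 3 \<le> card S})"
      by (rule card_UN_large_subsets_blocks[OF steiner_systemD(4)[OF assms(1)] finite])
    also have "\<dots> = (\<Sum>L\<in>B. 5)"
      using card_subsets_card_ge_3 steiner_systemD(2)[OF assms(1)] by (intro sum.cong) auto
    finally show ?thesis by simp
  qed
  moreover have "card (?small \<union> ?large) = card ?small + card ?large"
    using finite assms(2) by (intro card_Un_disjoint) auto
  moreover have "card (?small \<union> ?large) \<le> card (\<Union>L\<in>B. Pow L)"
    using small_subsets_subset_Pow_blocks[OF assms(1,3)] finite by (intro card_mono) auto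
  moreover have "card P choose 2 \<le> 6 * card B"
    using choose_two_le_card_blocks[OF assms(1,2)] by (simp add: numeral_eq_Suc)
  ultimately show ?thesis by linarith
qed

lemma card_le_forb:
  assumes "simple_matrix m Fam" "\<not> has_config m Fam p q F"
  shows "card Fam \<le> forb m p q F"
proof -
  have "{card Fam | Fam. simple_matrix m Fam \<and> \<not> has_config m Fam p q F} \<subseteq> card ` Pow (Pow {..<m})"
    unfolding simple_matrix_def by auto
  then have "finite {card Fam | Fam. simple_matrix m Fam \<and> \<not> has_config m Fam p q F}"
    by (rule finite_subset) simp
  then show ?thesis unfolding forb_def using assms by (intro Max_ge) auto
qed

lemma forb_matA_ge:
  assumes "steiner_system {..<m} 4 B" "2 \<le> m"
  shows "11/6 * real (m choose 2) + m + 1 \<le> forb m 3 4 matA"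
proof -
  have "simple_matrix m (\<Union>L\<in>B. Pow L)"
    using steiner_systemD(1)[OF assms(1)] unfolding simple_matrix_def by auto
  moreover have "\<not> has_config m (\<Union>L\<in>B. Pow L) 3 4 matA"
    using not_has_config_matA_Pow_blocks steiner_systemD(2,4)[OF assms(1)]
      steiner_system_finite[OF assms(1)] by simp
  ultimately have "card (\<Union>L\<in>B. Pow L) \<le> forb m 3 4 matA" by (rule card_le_forb)
  moreover have "11/6 * real (m choose 2) + m + 1 \<le> card (\<Union>L\<in>B. Pow L)"
    using card_Pow_blocks_ge[OF assms(1)] assms(2) by simp
  ultimately show ?thesis by linarith
qed

lemma exists_power_between:
  fixes b k :: nat
  assumes "2 \<le> b" "1 \<le> k"
  obtains n where "k < b ^ n" "b ^ n \<le> b * k"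
proof -
  have "k < b ^ k"
    using less_exp[of k] power_mono[of 2 b k] assms(1) by linarith
  then obtain n where n: "k < b ^ n" "\<And>i. i < n \<Longrightarrow> \<not> k < b ^ i"
    using exists_least_iff[of "\<lambda>n. k < b ^ n"] by blast
  have "n \<noteq> 0" using n(1) assms(2) by (intro notI) simp
  then have "b ^ n = b * b ^ (n - 1)" by (simp add: power_eq_if)
  also have "\<dots> \<le> b * k" using n(2)[of "n - 1"] \<open>n \<noteq> 0\<close> by simp
  finally show thesis using that n(1) by blast
qed

theorem mainTheorem3:
  fixes k :: nat
  assumes "k \<ge> 1"
  shows "\<exists>m::nat. m \<le> 64 * k + 1 \<and>
           real (forb m 3 4 matA) \<ge> 5/3 * real (m choose 2) + real (m choose 1) + real (m choose 0) + real k"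
proof -
  obtain n where n: "16 * k < 4 ^ n" "4 ^ n \<le> 4 * (16 * k)"
    using exists_power_between[of 4 "16 * k"] assms by auto
  define m :: nat where "m = 4 ^ n"
  have m: "16 * k < m" "m \<le> 64 * k" using n by (simp_all add: m_def)
  obtain B where "steiner_system {..<m} 4 B"
    unfolding m_def using ex_steiner_system_power_of_4 by blast
  moreover have "2 \<le> m" using m(1) assms by linarith
  ultimately have "11/6 * real (m choose 2) + m + 1 \<le> forb m 3 4 matA"
    by (rule forb_matA_ge)
  moreover have "6 * k \<le> m choose 2"
  proof -
    have "16 * k \<le> m - 1" using m(1) by simp
    then have "16 * k * 1 \<le> (m - 1) * m" using \<open>2 \<le> m\<close> by (intro mult_le_mono) auto
    then show ?thesis by (simp add: choose_two algebra_simps)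
  qed
  ultimately show ?thesis
    using m(2) by (intro exI[of _ m]) auto
qed

end
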